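(* Let $A,B\in\mathrm{M}_n(\mathbb{C})$ and let $p(x)=\sum_{k=0}^d a_kx^k\in\mathbb{C}[x]$ be a nonconstant polynomial of degree $d$. Then $$\|p(AB)-p(BA)\|_F^2\le n\left(\int_{\|v\|=1}\|(AB-BA)v\|^2\,d\sigma(v)\right)\left(\sum_{k=1}^d |a_k|\,k\,\|A\|_2^{k-1}\|B\|_2^{k-1}\right)^2,$$ where $\sigma$ is the normalized uniform probability measure on the unit sphere of $\mathbb{C}^n$.
   Context: $\|X\|_F=\sqrt{\mathrm{trace}(X^*X)}$ is the Frobenius norm and $\|X\|_2=\sup_{\|v\|=1}\|Xv\|$ is the operator norm of $X\in\mathrm{M}_n(\mathbb{C})$, with $\|\cdot\|$ the Euclidean norm on $\mathbb{C}^n$. *)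

theory Defs
  imports "HOL-Analysis.Analysis" "HOL-Computational_Algebra.Polynomial"
begin

text \<open>Complex n x n matrices are rendered as complex^'n^'n (n = CARD('n)).\<close>

definition conj_transpose :: "complex^'n^'n \<Rightarrow> complex^'n^'n" where
  "conj_transpose X = (\<chi> i j. cnj (X $ j $ i))"

text \<open>Frobenius norm: sqrt(trace(X^* X)) (the trace is real and nonnegative).\<close>
definition frob_norm :: "complex^'n^'n \<Rightarrow> real" where
  "frob_norm X = sqrt (Re (trace (conj_transpose X ** X)))"

definition op_norm :: "complex^'n^'n \<Rightarrow> real" where
  "op_norm X = Sup {norm (X *v v) | v. norm v = 1}"

primrec mat_pow :: "complex^'n^'n \<Rightarrow> nat \<Rightarrow> complex^'n^'n" where
  "mat_pow M 0 = mat 1"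
| "mat_pow M (Suc k) = M ** mat_pow M k"

definition mat_scale :: "complex \<Rightarrow> complex^'n^'n \<Rightarrow> complex^'n^'n" where
  "mat_scale c M = (\<chi> i j. c * M $ i $ j)"

definition poly_mat :: "complex poly \<Rightarrow> complex^'n^'n \<Rightarrow> complex^'n^'n" where
  "poly_mat p M = (\<Sum>k\<le>degree p. mat_scale (coeff p k) (mat_pow M k))"

text \<open>Normalized uniform (rotation-invariant) probability measure on the unit sphere of C^n,
  realised as the image of the normalized Lebesgue measure on the unit ball under v \<mapsto> v/|v|
  (the cone-measure construction of normalized surface measure).\<close>
definition sphere_measure :: "(complex^'n) measure" where
  "sphere_measure = distr (uniform_measure lborel (ball 0 1)) borel sgn"

end

theory Submission
  imports Defs "HOL-Probability.Probability_Measure"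
begin

(* Put X = AB and Y = BA; both have operator norm at most K = \<parallel>A\<parallel>\<^sub>2 \<parallel>B\<parallel>\<^sub>2.
   From X^(k+1) - Y^(k+1) = X (X^k - Y^k) + (X - Y) Y^k and the mixed bounds
   \<parallel>MN\<parallel>\<^sub>F \<le> \<parallel>M\<parallel>\<^sub>2 \<parallel>N\<parallel>\<^sub>F, \<parallel>NM\<parallel>\<^sub>F \<le> \<parallel>N\<parallel>\<^sub>F \<parallel>M\<parallel>\<^sub>2 one gets \<parallel>X^k - Y^k\<parallel>\<^sub>F \<le> k K^(k-1) \<parallel>X - Y\<parallel>\<^sub>F,
   hence \<parallel>p(X) - p(Y)\<parallel>\<^sub>F \<le> (\<Sum> |a\<^sub>k| k K^(k-1)) \<parallel>X - Y\<parallel>\<^sub>F.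
   It remains to see that n \<integral> \<parallel>Cv\<parallel>\<^sup>2 d\<sigma> = \<parallel>C\<parallel>\<^sub>F\<^sup>2, i.e. that the second moments of \<sigma> are
   \<integral> v\<^sub>j conj(v\<^sub>l) d\<sigma> = \<delta>\<^sub>j\<^sub>l / n.  Changing the sign of a coordinate, or swapping two
   coordinates, preserves Lebesgue measure and the norm, hence \<sigma>; the first kills the
   off-diagonal moments, the second makes the diagonal ones equal, and they sum to 1. *)

section \<open>Frobenius and operator norms\<close>

lemma norm_vec_power2: "(norm (x::'a::real_normed_vector^'n))\<^sup>2 = (\<Sum>i\<in>UNIV. (norm (x$i))\<^sup>2)"
  by (simp add: norm_vec_def L2_set_def sum_nonneg)

lemma norm_axis: "norm (axis i (x::'a::real_normed_vector)) = norm x"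
proof -
  have "(norm (axis i x))\<^sup>2 = (\<Sum>j\<in>UNIV. if j = i then (norm x)\<^sup>2 else 0)"
    unfolding norm_vec_power2 by (intro sum.cong) (auto simp: axis_def)
  then show ?thesis
    by (simp add: power2_eq_iff_nonneg)
qed

lemma norm_transpose:
  "norm (Finite_Cartesian_Product.transpose X) = norm (X::'a::real_normed_vector^'n^'m)"
proof -
  have "(norm (Finite_Cartesian_Product.transpose X))\<^sup>2 = (norm X)\<^sup>2"
    unfolding norm_vec_power2 transpose_def vec_lambda_beta by (rule sum.swap)
  then show ?thesis
    by (simp add: power2_eq_iff_nonneg)
qed

lemma frob_norm_eq_norm: "frob_norm X = norm X"
proof -
  have "Re (trace (conj_transpose X ** X)) = (\<Sum>i\<in>UNIV. \<Sum>k\<in>UNIV. (cmod (X$k$i))\<^sup>2)"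
    unfolding trace_def conj_transpose_def matrix_matrix_mult_def
    by (simp add: mult.commute[of "cnj _"] flip: complex_norm_square)
  also have "\<dots> = (norm X)\<^sup>2"
    by (simp only: norm_vec_power2) (rule sum.swap)
  finally show ?thesis
    unfolding frob_norm_def by simp
qed

lemma op_norm_bdd_above: "bdd_above {norm ((X::complex^'n^'m) *v v) | v. norm v = 1}"
proof -
  obtain K where "\<And>v. norm (X *v v) \<le> K * norm v"
    using linear_bounded[OF matrix_vector_mul_linear[of X]] by blast
  then have "norm (X *v v) \<le> K" if "norm v = 1" for v
    using that by (metis mult.right_neutral)
  then show ?thesis
    by (auto intro: bdd_aboveI[of _ K])
qed

lemma norm_matrix_vector_le_op_norm: "norm (X *v v) \<le> op_norm X * norm v"
proof (cases "v = 0")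
  case False
  have "X *v v = norm v *\<^sub>R (X *v sgn v)"
    using False by (simp add: sgn_div_norm linear_cmul[OF matrix_vector_mul_linear])
  then have "norm (X *v v) = norm v * norm (X *v sgn v)"
    by simp
  also have "\<dots> \<le> norm v * op_norm X"
  proof (rule mult_left_mono)
    show "norm (X *v sgn v) \<le> op_norm X"
      unfolding op_norm_def using False op_norm_bdd_above[of X]
      by (intro cSup_upper) (auto simp: norm_sgn)
  qed simp
  finally show ?thesis
    by (simp only: mult.commute)
qed simp

lemma op_norm_nonneg: "0 \<le> op_norm X"
proof -
  have "norm (X *v axis undefined 1) \<le> op_norm X"
    using norm_matrix_vector_le_op_norm[of X "axis undefined 1"] by (simp add: norm_axis)
  then show ?thesis
    using norm_ge_zero order_trans by blast
qed

lemma op_norm_le: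
  assumes "\<And>v. norm (X *v v) \<le> K * norm v"
  shows "op_norm X \<le> K"
  unfolding op_norm_def
proof (rule cSup_least)
  have "norm (axis undefined (1::complex)) = 1"
    by (simp add: norm_axis)
  then show "{norm (X *v v) | v. norm v = 1} \<noteq> {}"
    by blast
next
  fix x
  assume "x \<in> {norm (X *v v) | v. norm v = 1}"
  then obtain v where "x = norm (X *v v)" "norm v = 1"
    by blast
  then show "x \<le> K"
    using assms[of v] by simp
qed

lemma op_norm_mult_le: "op_norm (X ** Y) \<le> op_norm X * op_norm Y"
proof (rule op_norm_le)
  fix v
  have "norm ((X ** Y) *v v) \<le> op_norm X * norm (Y *v v)"
    by (metis matrix_vector_mul_assoc norm_matrix_vector_le_op_norm)
  also have "\<dots> \<le> op_norm X * (op_norm Y * norm v)"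
    by (intro mult_left_mono norm_matrix_vector_le_op_norm op_norm_nonneg)
  finally show "norm ((X ** Y) *v v) \<le> op_norm X * op_norm Y * norm v"
    by (simp add: mult.assoc)
qed

lemma op_norm_mat_pow_le: "op_norm (mat_pow X k) \<le> op_norm X ^ k"
proof (induction k)
  case 0
  show ?case
    by (simp add: op_norm_le)
next
  case (Suc k)
  have "op_norm (mat_pow X (Suc k)) \<le> op_norm X * op_norm (mat_pow X k)"
    by (simp add: op_norm_mult_le)
  also have "\<dots> \<le> op_norm X * op_norm X ^ k"
    by (intro mult_left_mono Suc.IH op_norm_nonneg)
  finally show ?case
    by simp
qed

text \<open>Here \<open>\<bullet>\<close> is the real inner product \<open>Re (x\<^sup>* y)\<close> on \<open>complex^'n\<close>, which is all that
  norm estimates need.\<close>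

lemma inner_conj_transpose_matrix_vector: "(conj_transpose X *v v) \<bullet> w = v \<bullet> (X *v w)"
proof -
  have "(cnj a * b) \<bullet> c = b \<bullet> (a * c)" for a b c :: complex
    by (simp add: inner_complex_def algebra_simps)
  then show ?thesis
    unfolding inner_vec_def matrix_vector_mult_def conj_transpose_def
    by (simp only: vec_lambda_beta inner_sum_left inner_sum_right) (rule sum.swap)
qed

lemma op_norm_conj_transpose_le: "op_norm (conj_transpose X) \<le> op_norm X"
proof (rule op_norm_le)
  fix w
  let ?u = "conj_transpose X *v w"
  have "(norm ?u)\<^sup>2 = w \<bullet> (X *v ?u)"
    by (simp add: power2_norm_eq_inner inner_conj_transpose_matrix_vector)
  also have "\<dots> \<le> norm w * norm (X *v ?u)"
    by (rule norm_cauchy_schwarz)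
  also have "\<dots> \<le> norm w * (op_norm X * norm ?u)"
    by (intro mult_left_mono norm_matrix_vector_le_op_norm norm_ge_zero)
  finally have le: "norm ?u * norm ?u \<le> (op_norm X * norm w) * norm ?u"
    by (simp add: power2_eq_square algebra_simps)
  show "norm ?u \<le> op_norm X * norm w"
  proof (cases "norm ?u = 0")
    case True
    then show ?thesis
      by (simp add: op_norm_nonneg)
  next
    case False
    then show ?thesis
      using mult_right_le_imp_le[OF le] by simp
  qed
qed

definition conj_vec :: "complex^'n \<Rightarrow> complex^'n" where
  "conj_vec v = (\<chi> i. cnj (v$i))"

lemma norm_conj_vec [simp]: "norm (conj_vec v) = norm v"
  by (simp add: norm_vec_def conj_vec_def)

lemma transpose_matrix_vector_eq:
  "Finite_Cartesian_Product.transpose X *v v = conj_vec (conj_transpose X *v conj_vec v)"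
  by (simp add: vec_eq_iff matrix_vector_mult_def transpose_def conj_transpose_def conj_vec_def)

lemma op_norm_transpose_le: "op_norm (Finite_Cartesian_Product.transpose X) \<le> op_norm X"
proof (rule op_norm_le)
  fix v
  have "norm (Finite_Cartesian_Product.transpose X *v v) = norm (conj_transpose X *v conj_vec v)"
    by (simp only: transpose_matrix_vector_eq norm_conj_vec)
  also have "\<dots> \<le> op_norm (conj_transpose X) * norm v"
    using norm_matrix_vector_le_op_norm[of "conj_transpose X" "conj_vec v"] by simp
  also have "\<dots> \<le> op_norm X * norm v"
    by (intro mult_right_mono op_norm_conj_transpose_le norm_ge_zero)
  finally show "norm (Finite_Cartesian_Product.transpose X *v v) \<le> op_norm X * norm v" .
qed

lemma row_matrix_mult: "(Y ** X) $ i = Finite_Cartesian_Product.transpose X *v (Y $ i)"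
  for X :: "'a::comm_semiring_1^'n^'p" and Y :: "'a^'p^'m"
  by (simp add: vec_eq_iff matrix_matrix_mult_def matrix_vector_mult_def transpose_def ac_simps)

lemma norm_matrix_mult_le_transpose:
  "norm (Y ** X) \<le> op_norm (Finite_Cartesian_Product.transpose X) * norm (Y::complex^'n^'m)"
proof -
  let ?K = "op_norm (Finite_Cartesian_Product.transpose X)"
  have "(norm (Y ** X))\<^sup>2 = (\<Sum>i\<in>UNIV. (norm ((Y ** X)$i))\<^sup>2)"
    by (rule norm_vec_power2)
  also have "\<dots> \<le> (\<Sum>i\<in>UNIV. (?K * norm (Y$i))\<^sup>2)"
    unfolding row_matrix_mult
    by (intro sum_mono power_mono norm_matrix_vector_le_op_norm norm_ge_zero)
  also have "\<dots> = (?K * norm Y)\<^sup>2"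
    by (simp add: power_mult_distrib norm_vec_power2[of Y] sum_distrib_left)
  finally show ?thesis
    by (rule power2_le_imp_le) (intro mult_nonneg_nonneg op_norm_nonneg norm_ge_zero)
qed

lemma norm_matrix_mult_le_left: "norm (X ** Y) \<le> op_norm X * norm Y"
proof -
  have "norm (X ** Y)
      = norm (Finite_Cartesian_Product.transpose Y ** Finite_Cartesian_Product.transpose X)"
    by (metis matrix_transpose_mul norm_transpose)
  also have "\<dots> \<le> op_norm X * norm Y"
    using norm_matrix_mult_le_transpose[of "Finite_Cartesian_Product.transpose Y"
        "Finite_Cartesian_Product.transpose X"]
    by (simp only: norm_transpose transpose_transpose)
  finally show ?thesis .
qed

lemma norm_matrix_mult_le_right: "norm (Y ** X) \<le> norm Y * op_norm X"
  by (metis mult.commute mult_right_mono norm_ge_zero norm_matrix_mult_le_transpose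
      op_norm_transpose_le order_trans)

section \<open>Polynomials of two matrices close in Frobenius norm\<close>

lemma matrix_diff_ldistrib: "(X::'a::ring_1^'n^'m) ** (P - Q) = X ** P - X ** Q"
  by (simp add: vec_eq_iff matrix_matrix_mult_def sum_subtractf right_diff_distrib)

lemma matrix_diff_rdistrib: "((X::'a::ring_1^'n^'m) - Y) ** Q = X ** Q - Y ** Q"
  by (simp add: vec_eq_iff matrix_matrix_mult_def sum_subtractf left_diff_distrib)

lemma norm_mat_pow_diff_le:
  assumes X: "op_norm X \<le> K" and Y: "op_norm Y \<le> K"
  shows "norm (mat_pow X k - mat_pow Y k) \<le> real k * K ^ (k - 1) * norm (X - Y)"
proof (induction k)
  case 0
  show ?case
    by simp
next
  case (Suc k)
  let ?P = "mat_pow X k" and ?Q = "mat_pow Y k"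
  have K: "0 \<le> K"
    using X op_norm_nonneg order_trans by blast
  have "mat_pow X (Suc k) - mat_pow Y (Suc k) = X ** (?P - ?Q) + (X - Y) ** ?Q"
    by (simp add: matrix_diff_ldistrib matrix_diff_rdistrib)
  then have "norm (mat_pow X (Suc k) - mat_pow Y (Suc k))
      \<le> norm (X ** (?P - ?Q)) + norm ((X - Y) ** ?Q)"
    by (simp only: norm_triangle_ineq)
  also have "\<dots> \<le> op_norm X * norm (?P - ?Q) + norm (X - Y) * op_norm ?Q"
    by (intro add_mono norm_matrix_mult_le_left norm_matrix_mult_le_right)
  also have "\<dots> \<le> K * (real k * K ^ (k - 1) * norm (X - Y)) + norm (X - Y) * K ^ k"
  proof (rule add_mono)
    show "op_norm X * norm (?P - ?Q) \<le> K * (real k * K ^ (k - 1) * norm (X - Y))"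
      by (rule mult_mono[OF X Suc.IH K norm_ge_zero])
    show "norm (X - Y) * op_norm ?Q \<le> norm (X - Y) * K ^ k"
      using order_trans[OF op_norm_mat_pow_le power_mono[OF Y op_norm_nonneg]]
      by (rule mult_left_mono) simp
  qed
  also have "\<dots> = real (Suc k) * K ^ (Suc k - 1) * norm (X - Y)"
    by (cases k) (simp_all add: algebra_simps)
  finally show ?case .
qed

lemma norm_mat_scale: "norm (mat_scale c M) = cmod c * norm M"
proof -
  have "(norm (mat_scale c M))\<^sup>2 = (cmod c * norm M)\<^sup>2"
    by (simp add: norm_vec_power2 mat_scale_def norm_mult power_mult_distrib sum_distrib_left)
  then show ?thesis
    by (simp add: power2_eq_iff_nonneg)
qed

lemma mat_scale_diff: "mat_scale c M - mat_scale c N = mat_scale c (M - N)"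
  by (simp add: vec_eq_iff mat_scale_def right_diff_distrib)

lemma norm_poly_mat_diff_le:
  assumes X: "op_norm X \<le> K" and Y: "op_norm Y \<le> K"
  shows "norm (poly_mat p X - poly_mat p Y)
    \<le> (\<Sum>k=1..degree p. cmod (coeff p k) * real k * K ^ (k - 1)) * norm (X - Y)"
proof -
  have "norm (poly_mat p X - poly_mat p Y)
      = norm (\<Sum>k\<le>degree p. mat_scale (coeff p k) (mat_pow X k - mat_pow Y k))"
    unfolding poly_mat_def by (simp add: mat_scale_diff flip: sum_subtractf)
  also have "\<dots> \<le> (\<Sum>k\<le>degree p. cmod (coeff p k) * norm (mat_pow X k - mat_pow Y k))"
    unfolding norm_mat_scale[symmetric] by (rule norm_sum)
  also have "\<dots> \<le> (\<Sum>k\<le>degree p. cmod (coeff p k) * real k * K ^ (k - 1) * norm (X - Y))"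
  proof (rule sum_mono)
    fix k
    show "cmod (coeff p k) * norm (mat_pow X k - mat_pow Y k)
        \<le> cmod (coeff p k) * real k * K ^ (k - 1) * norm (X - Y)"
      using mult_left_mono[OF norm_mat_pow_diff_le[OF X Y, of k] norm_ge_zero[of "coeff p k"]]
      by (simp only: mult.assoc)
  qed
  also have "\<dots> = (\<Sum>k=1..degree p. cmod (coeff p k) * real k * K ^ (k - 1)) * norm (X - Y)"
  proof -
    have "{..degree p} = insert 0 {1..degree p}"
      by auto
    then show ?thesis
      by (simp add: sum_distrib_right)
  qed
  finally show ?thesis .
qed

section \<open>Second moments of the uniform measure on the sphere\<close>

lemma borel_measurable_linear:
  "linear (f :: 'a::euclidean_space \<Rightarrow> 'b::euclidean_space) \<Longrightarrow> f \<in> borel_measurable borel"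
  by (intro borel_measurable_continuous_onI linear_continuous_on) (simp add: linear_conv_bounded_linear)

lemma vimage_box_signed_permutation:
  fixes T :: "'a::euclidean_space \<Rightarrow> 'a" and \<pi> :: "'a \<Rightarrow> 'a" and s :: "'a \<Rightarrow> real"
  assumes perm: "bij_betw \<pi> Basis Basis"
    and sign: "\<And>b. b \<in> Basis \<Longrightarrow> s b = 1 \<or> s b = -1"
    and coord: "\<And>x b. b \<in> Basis \<Longrightarrow> T x \<bullet> \<pi> b = s b * (x \<bullet> b)"
    and le: "\<And>b. b \<in> Basis \<Longrightarrow> l \<bullet> b \<le> u \<bullet> b"
  obtains l' u' where "T -` box l u = box l' u'"
    and "\<And>b. b \<in> Basis \<Longrightarrow> l' \<bullet> b \<le> u' \<bullet> b \<and> (u' - l') \<bullet> b = (u - l) \<bullet> \<pi> b"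
proof -
  define l' where "l' = (\<Sum>b\<in>Basis. (if s b = 1 then l \<bullet> \<pi> b else - (u \<bullet> \<pi> b)) *\<^sub>R b)"
  define u' where "u' = (\<Sum>b\<in>Basis. (if s b = 1 then u \<bullet> \<pi> b else - (l \<bullet> \<pi> b)) *\<^sub>R b)"
  have l': "l' \<bullet> b = (if s b = 1 then l \<bullet> \<pi> b else - (u \<bullet> \<pi> b))"
    and u': "u' \<bullet> b = (if s b = 1 then u \<bullet> \<pi> b else - (l \<bullet> \<pi> b))" if "b \<in> Basis" for b
    using that by (simp_all add: l'_def u'_def inner_sum_left_Basis)
  have "x \<in> T -` box l u \<longleftrightarrow> x \<in> box l' u'" for x
  proof -
    have "x \<in> T -` box l u \<longleftrightarrow> (\<forall>b\<in>\<pi> ` Basis. l \<bullet> b < T x \<bullet> b \<and> T x \<bullet> b < u \<bullet> b)"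
      using perm by (simp add: mem_box bij_betw_def)
    also have "\<dots> \<longleftrightarrow> (\<forall>b\<in>Basis. l \<bullet> \<pi> b < T x \<bullet> \<pi> b \<and> T x \<bullet> \<pi> b < u \<bullet> \<pi> b)"
      by simp
    also have "\<dots> \<longleftrightarrow> (\<forall>b\<in>Basis. l' \<bullet> b < x \<bullet> b \<and> x \<bullet> b < u' \<bullet> b)"
    proof (intro ball_cong refl)
      fix b :: 'a
      assume b: "b \<in> Basis"
      show "(l \<bullet> \<pi> b < T x \<bullet> \<pi> b \<and> T x \<bullet> \<pi> b < u \<bullet> \<pi> b) = (l' \<bullet> b < x \<bullet> b \<and> x \<bullet> b < u' \<bullet> b)"
        using sign[OF b] coord[OF b, of x] l'[OF b] u'[OF b] by auto
    qed
    finally show ?thesis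
      by (simp add: mem_box)
  qed
  then have "T -` box l u = box l' u'"
    by blast
  moreover have "l' \<bullet> b \<le> u' \<bullet> b \<and> (u' - l') \<bullet> b = (u - l) \<bullet> \<pi> b" if b: "b \<in> Basis" for b
  proof -
    have "\<pi> b \<in> Basis"
      using perm b by (auto simp: bij_betw_def)
    then show ?thesis
      using le[of "\<pi> b"] sign[OF b] l'[OF b] u'[OF b] by (auto simp: inner_diff_left)
  qed
  ultimately show ?thesis
    by (rule that)
qed

lemma distr_lborel_signed_permutation:
  fixes T :: "'a::euclidean_space \<Rightarrow> 'a" and \<pi> :: "'a \<Rightarrow> 'a" and s :: "'a \<Rightarrow> real"
  assumes perm: "bij_betw \<pi> Basis Basis"
    and sign: "\<And>b. b \<in> Basis \<Longrightarrow> s b = 1 \<or> s b = -1"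
    and coord: "\<And>x b. b \<in> Basis \<Longrightarrow> T x \<bullet> \<pi> b = s b * (x \<bullet> b)"
    and meas: "T \<in> borel_measurable borel"
  shows "distr lborel borel T = lborel"
proof (rule lborel_eqI[symmetric])
  fix l u :: 'a
  assume "\<And>b. b \<in> Basis \<Longrightarrow> l \<bullet> b \<le> u \<bullet> b"
  then obtain l' u' where preimage: "T -` box l u = box l' u'"
    and box: "\<And>b. b \<in> Basis \<Longrightarrow> l' \<bullet> b \<le> u' \<bullet> b \<and> (u' - l') \<bullet> b = (u - l) \<bullet> \<pi> b"
    using vimage_box_signed_permutation[OF perm sign coord] by blast
  have "emeasure (distr lborel borel T) (box l u) = emeasure lborel (box l' u')"
    by (simp add: emeasure_distr meas preimage)
  also have "\<dots> = ennreal (\<Prod>b\<in>Basis. (u' - l') \<bullet> b)"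
    using box by (intro emeasure_lborel_box) blast
  also have "(\<Prod>b\<in>Basis. (u' - l') \<bullet> b) = (\<Prod>b\<in>Basis. (u - l) \<bullet> \<pi> b)"
    using box by (intro prod.cong) auto
  also have "\<dots> = (\<Prod>b\<in>Basis. (u - l) \<bullet> b)"
    by (rule prod.reindex_bij_betw[OF perm])
  finally show "emeasure (distr lborel borel T) (box l u) = (\<Prod>b\<in>Basis. (u - l) \<bullet> b)" .
qed simp

lemma distr_uniform_measure_lborel:
  assumes lborel: "distr lborel borel T = lborel" and meas: "T \<in> borel_measurable borel"
    and S: "S \<in> sets borel" "T -` S = S"
  shows "distr (uniform_measure lborel S) borel T = uniform_measure lborel S"
proof (rule measure_eqI)
  fix A
  assume "A \<in> sets (distr (uniform_measure lborel S) borel T)"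
  then have A: "A \<in> sets borel"
    by simp
  have meas_U: "T \<in> measurable (uniform_measure lborel S) borel"
    using meas by (simp cong: measurable_cong_sets)
  have "emeasure (distr (uniform_measure lborel S) borel T) A
      = emeasure lborel (S \<inter> T -` A) / emeasure lborel S"
    using measurable_sets_borel[OF meas A] A S meas_U by (simp add: emeasure_distr)
  also have "S \<inter> T -` A = T -` (S \<inter> A)"
    using S by blast
  also have "emeasure lborel (T -` (S \<inter> A)) = emeasure (distr lborel borel T) (S \<inter> A)"
    using A S meas by (simp add: emeasure_distr)
  also have "\<dots> = emeasure lborel (S \<inter> A)"
    by (simp only: lborel)
  finally show "emeasure (distr (uniform_measure lborel S) borel T) A = emeasure (uniform_measure lborel S) A"
    using A S by simp
qed simp

lemma sets_sphere_measure [measurable_cong]: "sets sphere_measure = sets borel"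
  by (simp add: sphere_measure_def)

lemma measurable_sphere_measure: "measurable sphere_measure N = measurable borel N"
  by (rule measurable_cong_sets) (simp_all add: sets_sphere_measure)

lemma prob_space_uniform_measure_unit_ball:
  "prob_space (uniform_measure lborel (ball (0::'a::euclidean_space) 1))"
proof (rule prob_space_uniform_measure)
  show "emeasure lborel (ball (0::'a) 1) \<noteq> \<infinity>"
    using emeasure_lborel_ball_finite[of "0::'a" 1] by (simp add: less_top)
  then show "emeasure lborel (ball (0::'a) 1) \<noteq> 0"
    using content_ball_pos[of 1 "0::'a"] by (simp add: emeasure_eq_ennreal_measure)
qed

lemma prob_space_sphere_measure: "prob_space sphere_measure"
  unfolding sphere_measure_def
  by (rule prob_space.prob_space_distr[OF prob_space_uniform_measure_unit_ball])
     (simp cong: measurable_cong_sets)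

lemma AE_sphere_measure_norm: "AE v in sphere_measure. norm v = 1"
  unfolding sphere_measure_def
proof (subst AE_distr_iff)
  have "AE x in uniform_measure lborel (ball 0 1). x \<noteq> (0::complex^'n)"
    by (rule AE_uniform_measureI) (use AE_lborel_singleton[of 0] in \<open>auto elim: AE_mp\<close>)
  then show "AE x in uniform_measure lborel (ball 0 1). norm (sgn (x::complex^'n)) = 1"
    by eventually_elim (simp add: norm_sgn)
qed (simp_all cong: measurable_cong_sets)

lemma integrable_sphere_measure:
  fixes f :: "complex^'n \<Rightarrow> 'b::{banach, second_countable_topology}"
  assumes "continuous_on UNIV f"
  shows "integrable sphere_measure f"
proof -
  interpret prob_space "sphere_measure :: (complex^'n) measure"
    by (rule prob_space_sphere_measure)
  obtain B where B: "\<And>v. v \<in> cball 0 1 \<Longrightarrow> norm (f v) \<le> B"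
    using compact_imp_bounded[OF compact_continuous_image[OF continuous_on_subset[OF assms]]]
    by (metis bounded_iff compact_cball image_eqI subset_UNIV)
  have "AE v in sphere_measure. norm (f v) \<le> B"
    using AE_sphere_measure_norm by eventually_elim (simp add: B)
  moreover have "f \<in> borel_measurable sphere_measure"
    using borel_measurable_continuous_onI[OF assms] by (simp add: measurable_sphere_measure)
  ultimately show ?thesis
    by (intro integrable_const_bound)
qed

lemma distr_sphere_measure:
  fixes T :: "complex^'n \<Rightarrow> complex^'n"
  assumes lborel: "distr lborel borel T = lborel" and "linear T"
    and norm: "\<And>x. norm (T x) = norm x"
  shows "distr sphere_measure borel T = sphere_measure"
proof -
  let ?U = "uniform_measure lborel (ball (0::complex^'n) 1)"
  have meas: "T \<in> borel_measurable borel"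
    using \<open>linear T\<close> by (rule borel_measurable_linear)
  have meas_U: "T \<in> measurable ?U borel" "sgn \<in> measurable ?U (borel :: (complex^'n) measure)"
    using meas by (simp_all cong: measurable_cong_sets)
  have "T \<circ> sgn = sgn \<circ> T"
    using \<open>linear T\<close> norm by (auto simp: sgn_div_norm linear_cmul)
  then have "distr sphere_measure borel T = distr (distr ?U borel T) borel sgn"
    unfolding sphere_measure_def using meas meas_U by (simp add: distr_distr)
  also have "distr ?U borel T = ?U"
    using norm by (intro distr_uniform_measure_lborel lborel meas) auto
  finally show ?thesis
    by (simp add: sphere_measure_def)
qed

lemma integral_sphere_measure_linear_isometry:
  fixes T :: "complex^'n \<Rightarrow> complex^'n" and f :: "complex^'n \<Rightarrow> complex"
  assumes "distr lborel borel T = lborel" "linear T" "\<And>x. norm (T x) = norm x"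
    and f: "f \<in> borel_measurable borel"
  shows "(\<integral>v. f (T v) \<partial>sphere_measure) = (\<integral>v. f v \<partial>sphere_measure)"
proof -
  have "T \<in> measurable sphere_measure borel"
    using borel_measurable_linear[OF \<open>linear T\<close>] by (simp add: measurable_sphere_measure)
  then have "(\<integral>v. f (T v) \<partial>sphere_measure) = integral\<^sup>L (distr sphere_measure borel T) f"
    using f by (rule integral_distr[symmetric])
  then show ?thesis
    using assms by (simp add: distr_sphere_measure)
qed

definition negate_coord :: "'n \<Rightarrow> complex^'n \<Rightarrow> complex^'n" where
  "negate_coord k x = (\<chi> i. if i = k then - x$i else x$i)"

definition swap_coords :: "'n \<Rightarrow> 'n \<Rightarrow> complex^'n \<Rightarrow> complex^'n" where
  "swap_coords j l x = (\<chi> i. x $ Transposition.transpose j l i)"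

lemma linear_negate_coord: "linear (negate_coord k)"
  by (rule linearI) (auto simp: negate_coord_def vec_eq_iff)

lemma linear_swap_coords: "linear (swap_coords j l)"
  by (rule linearI) (auto simp: swap_coords_def vec_eq_iff)

lemma norm_negate_coord: "norm (negate_coord k x) = norm x"
  unfolding norm_vec_def negate_coord_def by (auto intro!: arg_cong[where f="\<lambda>f. L2_set f UNIV"])

lemma norm_swap_coords: "norm (swap_coords j l x) = norm x"
proof -
  have "(\<Sum>i\<in>UNIV. (norm (x $ Transposition.transpose j l i))\<^sup>2) = (\<Sum>i\<in>UNIV. (norm (x $ i))\<^sup>2)"
    by (rule sum.reindex_bij_witness[of _ "Transposition.transpose j l" "Transposition.transpose j l"]) auto
  then show ?thesis
    by (simp add: norm_vec_def L2_set_def swap_coords_def)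
qed

lemma Basis_vec_complex_cases:
  assumes "(b::complex^'n) \<in> Basis"
  obtains i u where "b = axis i u" "u = 1 \<or> u = \<i>"
  using assms by (auto simp: Basis_vec_def Basis_complex_def)

lemma distr_lborel_negate_coord:
  fixes k :: "'n::finite"
  shows "distr lborel borel (negate_coord k) = lborel"
proof (rule distr_lborel_signed_permutation[where \<pi>=id and s="\<lambda>b. if b $ k = 0 then 1 else -1"])
  show "negate_coord k \<in> borel_measurable borel"
    by (rule borel_measurable_linear[OF linear_negate_coord])
  fix x and b :: "complex^'n"
  assume "b \<in> Basis"
  then obtain i u where "b = axis i u" "u = 1 \<or> u = \<i>"
    by (rule Basis_vec_complex_cases)
  moreover have "b $ k = (if k = i then u else 0)"
    using \<open>b = axis i u\<close> by (simp add: axis_def)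
  ultimately show "negate_coord k x \<bullet> id b = (if b $ k = 0 then 1 else -1) * (x \<bullet> b)"
    by (auto simp: inner_axis negate_coord_def)
qed simp_all

lemma swap_coords_axis: "swap_coords j l (axis i u) = axis (Transposition.transpose j l i) u"
  by (auto simp: swap_coords_def axis_def vec_eq_iff transpose_eq_iff)

lemma distr_lborel_swap_coords:
  fixes j l :: "'n::finite"
  shows "distr lborel borel (swap_coords j l) = lborel"
proof (rule distr_lborel_signed_permutation[where \<pi>="swap_coords j l" and s="\<lambda>_. 1"])
  have "swap_coords j l b \<in> Basis" if b: "b \<in> Basis" for b
  proof -
    obtain i u where "b = axis i u" "u = 1 \<or> u = \<i>"
      using b by (rule Basis_vec_complex_cases)
    then show ?thesis
      by (auto simp: swap_coords_axis Basis_vec_def Basis_complex_def)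
  qed
  moreover have "swap_coords j l (swap_coords j l x) = x" for x
    by (simp add: swap_coords_def vec_eq_iff)
  ultimately show "bij_betw (swap_coords j l) Basis Basis"
    by (intro bij_betw_byWitness[where f'="swap_coords j l"]) auto
  show "swap_coords j l \<in> borel_measurable borel"
    by (rule borel_measurable_linear[OF linear_swap_coords])
  fix x and b :: "complex^'n"
  assume "b \<in> Basis"
  then obtain i u where "b = axis i u"
    by (rule Basis_vec_complex_cases)
  then show "swap_coords j l x \<bullet> swap_coords j l b = 1 * (x \<bullet> b)"
    by (simp add: swap_coords_axis inner_axis) (simp add: swap_coords_def)
qed simp

lemma integral_sphere_measure_coord_product_off_diag:
  fixes j l :: "'n::finite"
  assumes "j \<noteq> l"
  shows "(\<integral>v. v$j * cnj (v$l) \<partial>sphere_measure) = 0"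
proof -
  let ?f = "\<lambda>v::complex^'n. v$j * cnj (v$l)"
  have "(\<integral>v. ?f v \<partial>sphere_measure) = (\<integral>v. ?f (negate_coord j v) \<partial>sphere_measure)"
    by (rule integral_sphere_measure_linear_isometry[symmetric, OF distr_lborel_negate_coord
          linear_negate_coord norm_negate_coord])
       (intro borel_measurable_continuous_onI continuous_intros)
  also have "\<dots> = - (\<integral>v. ?f v \<partial>sphere_measure)"
    using assms by (simp add: negate_coord_def flip: integral_minus)
  finally show ?thesis
    by simp
qed

lemma integral_sphere_measure_coord_product_diag_eq:
  fixes j l :: "'n::finite"
  shows "(\<integral>v. v$j * cnj (v$j) \<partial>sphere_measure) = (\<integral>v. v$l * cnj (v$l) \<partial>sphere_measure)"
proof -
  let ?f = "\<lambda>v::complex^'n. v$j * cnj (v$j)"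
  have "(\<integral>v. ?f v \<partial>sphere_measure) = (\<integral>v. ?f (swap_coords j l v) \<partial>sphere_measure)"
    by (rule integral_sphere_measure_linear_isometry[symmetric, OF distr_lborel_swap_coords
          linear_swap_coords norm_swap_coords])
       (intro borel_measurable_continuous_onI continuous_intros)
  then show ?thesis
    by (simp add: swap_coords_def)
qed

lemma integral_sphere_measure_norm_power2:
  "(\<integral>v. (\<Sum>j\<in>UNIV. v$j * cnj (v$j)) \<partial>(sphere_measure :: (complex^'n) measure)) = 1"
proof -
  interpret prob_space "sphere_measure :: (complex^'n) measure"
    by (rule prob_space_sphere_measure)
  have "(\<integral>v. (\<Sum>j\<in>UNIV. v$j * cnj (v$j)) \<partial>(sphere_measure :: (complex^'n) measure))
      = (\<integral>v. 1 \<partial>(sphere_measure :: (complex^'n) measure))"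
  proof (rule integral_cong_AE)
    show "(\<lambda>v. \<Sum>j\<in>UNIV. v$j * cnj (v$j)) \<in> borel_measurable (sphere_measure :: (complex^'n) measure)"
      unfolding measurable_sphere_measure by (intro borel_measurable_continuous_onI continuous_intros)
    show "AE v in sphere_measure. (\<Sum>j\<in>UNIV. v$j * cnj (v$j)) = (1::complex)"
      using AE_sphere_measure_norm
    proof eventually_elim
      case (elim v)
      have "(\<Sum>j\<in>UNIV. v$j * cnj (v$j)) = complex_of_real ((norm v)\<^sup>2)"
        by (simp only: norm_vec_power2 of_real_sum complex_norm_square)
      then show ?case
        using elim by (simp only: power_one of_real_1)
    qed
  qed simp
  then show ?thesis
    by (simp add: prob_space)
qed

lemma integral_sphere_measure_coord_product:
  "(\<integral>v. v$j * cnj (v$l) \<partial>(sphere_measure :: (complex^'n) measure))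
    = (if j = l then 1 / of_nat CARD('n) else 0)"
proof (cases "j = l")
  case True
  have "1 = (\<integral>v. (\<Sum>i\<in>UNIV. v$i * cnj (v$i)) \<partial>(sphere_measure :: (complex^'n) measure))"
    by (simp only: integral_sphere_measure_norm_power2)
  also have "\<dots> = (\<Sum>i\<in>(UNIV::'n set). \<integral>v. v$i * cnj (v$i) \<partial>sphere_measure)"
    by (intro Bochner_Integration.integral_sum integrable_sphere_measure continuous_intros)
  also have "\<dots> = (\<Sum>i\<in>(UNIV::'n set). \<integral>v. v$j * cnj (v$j) \<partial>sphere_measure)"
    by (intro sum.cong refl integral_sphere_measure_coord_product_diag_eq)
  also have "\<dots> = of_nat CARD('n) * (\<integral>v. v$j * cnj (v$j) \<partial>sphere_measure)"
    by simp
  finally have "of_nat CARD('n) * (\<integral>v. v$j * cnj (v$j) \<partial>(sphere_measure :: (complex^'n) measure)) = 1"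
    by (rule sym)
  then show ?thesis
    using True by (simp add: field_simps)
qed (simp add: integral_sphere_measure_coord_product_off_diag)

lemma integral_sphere_measure_linear_form_power2:
  fixes c :: "'n::finite \<Rightarrow> complex"
  shows "(\<integral>v. (cmod (\<Sum>j\<in>UNIV. c j * v$j))\<^sup>2 \<partial>(sphere_measure :: (complex^'n) measure))
     = (\<Sum>j\<in>UNIV. (cmod (c j))\<^sup>2) / real CARD('n)"
proof -
  have integrable: "integrable sphere_measure (\<lambda>v::complex^'n. c j * cnj (c l) * (v$j * cnj (v$l)))"
    for j l
    by (intro integrable_sphere_measure continuous_intros)
  have expand: "(\<Sum>j\<in>UNIV. c j * v$j) * cnj (\<Sum>j\<in>UNIV. c j * v$j)
      = (\<Sum>j\<in>UNIV. \<Sum>l\<in>UNIV. c j * cnj (c l) * (v$j * cnj (v$l)))" for v :: "complex^'n"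
    by (simp add: sum_product mult.commute mult.left_commute)
  have "complex_of_real (\<integral>v. (cmod (\<Sum>j\<in>UNIV. c j * v$j))\<^sup>2 \<partial>(sphere_measure :: (complex^'n) measure))
     = (\<integral>v. complex_of_real ((cmod (\<Sum>j\<in>UNIV. c j * v$j))\<^sup>2) \<partial>sphere_measure)"
    by (rule integral_complex_of_real[symmetric])
  also have "\<dots> = (\<integral>v. (\<Sum>j\<in>UNIV. \<Sum>l\<in>UNIV. c j * cnj (c l) * (v$j * cnj (v$l))) \<partial>sphere_measure)"
    by (simp only: complex_norm_square expand)
  also have "\<dots> = (\<Sum>j\<in>UNIV. \<Sum>l\<in>UNIV. c j * cnj (c l) * (\<integral>v. v$j * cnj (v$l) \<partial>sphere_measure))"
    by (simp add: Bochner_Integration.integral_sum integrable integrable_sum)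
  also have "\<dots> = (\<Sum>j\<in>UNIV. \<Sum>l\<in>UNIV. if j = l then c j * cnj (c l) / of_nat CARD('n) else 0)"
    by (intro sum.cong refl) (simp add: integral_sphere_measure_coord_product)
  also have "\<dots> = (\<Sum>j\<in>UNIV. c j * cnj (c j) / of_nat CARD('n))"
    by simp
  also have "\<dots> = complex_of_real ((\<Sum>j\<in>UNIV. (cmod (c j))\<^sup>2) / real CARD('n))"
    by (simp only: of_real_divide of_real_sum complex_norm_square of_real_of_nat_eq
        sum_divide_distrib)
  finally show ?thesis
    using of_real_eq_iff by blast
qed

lemma integral_sphere_measure_matrix_vector_power2:
  fixes C :: "complex^'n^'m"
  shows "real CARD('n) * (\<integral>v. (norm (C *v v))\<^sup>2 \<partial>sphere_measure) = (norm C)\<^sup>2"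
proof -
  have "(\<integral>v. (norm (C *v v))\<^sup>2 \<partial>sphere_measure)
      = (\<integral>v. (\<Sum>i\<in>UNIV. (cmod (\<Sum>j\<in>UNIV. C$i$j * v$j))\<^sup>2) \<partial>(sphere_measure :: (complex^'n) measure))"
    by (simp add: norm_vec_power2 matrix_vector_mult_def)
  also have "\<dots> = (\<Sum>i\<in>UNIV. \<integral>v. (cmod (\<Sum>j\<in>UNIV. C$i$j * v$j))\<^sup>2 \<partial>sphere_measure)"
    by (intro Bochner_Integration.integral_sum integrable_sphere_measure continuous_intros)
  also have "\<dots> = (\<Sum>i\<in>UNIV. (\<Sum>j\<in>UNIV. (cmod (C$i$j))\<^sup>2) / real CARD('n))"
    by (simp only: integral_sphere_measure_linear_form_power2)
  finally show ?thesis
    by (simp add: norm_vec_power2 sum_divide_distrib[symmetric])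
qed

theorem theorem5p3:
  fixes A B :: "complex^'n^'n" and p :: "complex poly"
  assumes "degree p \<ge> 1"
  shows "(frob_norm (poly_mat p (A ** B) - poly_mat p (B ** A)))\<^sup>2
    \<le> real CARD('n)
       * (\<integral>v. (norm ((A ** B - B ** A) *v v))\<^sup>2 \<partial>sphere_measure)
       * (\<Sum>k=1..degree p. cmod (coeff p k) * real k
            * op_norm A ^ (k - 1) * op_norm B ^ (k - 1))\<^sup>2"
proof -
  let ?S = "\<Sum>k=1..degree p. cmod (coeff p k) * real k * op_norm A ^ (k - 1) * op_norm B ^ (k - 1)"
  let ?C = "A ** B - B ** A"
  have AB: "op_norm (A ** B) \<le> op_norm A * op_norm B"
    by (rule op_norm_mult_le)
  have BA: "op_norm (B ** A) \<le> op_norm A * op_norm B"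
    using op_norm_mult_le[of B A] by (simp add: mult.commute)
  have "norm (poly_mat p (A ** B) - poly_mat p (B ** A)) \<le> ?S * norm ?C"
    using norm_poly_mat_diff_le[OF AB BA, of p] by (simp add: power_mult_distrib mult.assoc)
  then have "(frob_norm (poly_mat p (A ** B) - poly_mat p (B ** A)))\<^sup>2 \<le> (?S * norm ?C)\<^sup>2"
    unfolding frob_norm_eq_norm by (rule power_mono) simp
  also have "\<dots> = real CARD('n) * (\<integral>v. (norm (?C *v v))\<^sup>2 \<partial>sphere_measure) * ?S\<^sup>2"
    by (simp add: integral_sphere_measure_matrix_vector_power2 power_mult_distrib)
  finally show ?thesis .
qed

end
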